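(* In the setting described in the context: (1) If the model is DUR with constants $d,k$ and the parametrisation $(\tilde X,\Theta)$ is GTIP, then for all sufficiently small $\alpha>0$ there is $0<K<\infty$ such that $\mathbf E\{e^{\alpha|X|}\mid Y=y,\Theta=\theta\}\le e^{\alpha|\theta|}(1-\alpha d/2)+K$ for all $|\theta|>k$. (2) If the model is PUR with constants $d,k$ and the parametrisation $(X,\Theta)$ is GTIP, then for all sufficiently small $\alpha>0$ there is $0<K<\infty$ such that $\mathbf E\{e^{\alpha|y-\tilde X|}\mid Y=y,\Theta=\theta\}\le e^{\alpha|\theta|}(1-\alpha d/2)+K$ for all $|\theta|>k$.
   Context: Fix an observed value $y\in\mathbb R$. Consider the model $Y=X+Z_1$, $X=\Theta+Z_2$, where $Z_1,Z_2$ are independent real random variables, independent of $\Theta$, whose distributions are symmetric about $0$ and have continuous, bounded, everywhere positive Lebesgue densities $f_1,f_2$; $\Theta$ is given the improper flat (Lebesgue) prior on $\mathbb R$, and the posterior $\mathcal L(X,\Theta\mid Y=y)$ is proper. Write $\tilde X=X-\Theta$. A parametrisation $(U,\Theta)$, $U\in\{X,\tilde X\}$, is GTIP (geometrically tight in parameter) if there are constants $a,b>0$ not depending on $\theta$ such that $\mathbf P(|U|>x\mid Y=y,\Theta=\theta)\le ae^{-bx}$ for all $\theta\in\mathbb R$ and $x\ge0$. The model is DUR (data uniformly relevant) with constants $d,k>0$ if $|\mathbf E\{X\mid Y=y,\Theta=\theta\}|\le|\theta|-d$ for all $|\theta|>k$; it is PUR (parameter uniformly relevant) with constants $d,k>0$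 if $\operatorname{sgn}(\theta)\,\mathbf E\{X-y\mid Y=y,\Theta=\theta\}\ge d$ for all $|\theta|>k$. *)

theory Defs
  imports "HOL-Probability.Probability"
begin

definition noise_density :: "(real \<Rightarrow> real) \<Rightarrow> bool" where
  "noise_density f \<longleftrightarrow> continuous_on UNIV f \<and> (\<exists>B. \<forall>x. f x \<le> B) \<and> (\<forall>x. 0 < f x)
     \<and> (\<forall>x. f (- x) = f x) \<and> integrable lborel f \<and> (\<integral>x. f x \<partial>lborel) = 1"

text \<open>Unnormalised conditional density of X given Y = y, Theta = theta
  (flat prior on Theta): f1(y - x) f2(x - theta).\<close>
definition lik :: "(real \<Rightarrow> real) \<Rightarrow> (real \<Rightarrow> real) \<Rightarrow> real \<Rightarrow> real \<Rightarrow> real \<Rightarrow> real" where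
  "lik f1 f2 y \<theta> x = f1 (y - x) * f2 (x - \<theta>)"

definition norm_const :: "(real \<Rightarrow> real) \<Rightarrow> (real \<Rightarrow> real) \<Rightarrow> real \<Rightarrow> real \<Rightarrow> real" where
  "norm_const f1 f2 y \<theta> = (\<integral>x. lik f1 f2 y \<theta> x \<partial>lborel)"

definition cond_law :: "(real \<Rightarrow> real) \<Rightarrow> (real \<Rightarrow> real) \<Rightarrow> real \<Rightarrow> real \<Rightarrow> real measure" where
  "cond_law f1 f2 y \<theta> = density lborel (\<lambda>x. ennreal (lik f1 f2 y \<theta> x / norm_const f1 f2 y \<theta>))"

definition GTIP_X :: "(real \<Rightarrow> real) \<Rightarrow> (real \<Rightarrow> real) \<Rightarrow> real \<Rightarrow> bool" where
  "GTIP_X f1 f2 y \<longleftrightarrow> (\<exists>a>0. \<exists>b>0. \<forall>\<theta> t. t \<ge> 0 \<longrightarrow>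
      measure (cond_law f1 f2 y \<theta>) {x. \<bar>x\<bar> > t} \<le> a * exp (- b * t))"

text \<open>GTIP for the parametrisation (X~, Theta), X~ = X - Theta.\<close>
definition GTIP_Xt :: "(real \<Rightarrow> real) \<Rightarrow> (real \<Rightarrow> real) \<Rightarrow> real \<Rightarrow> bool" where
  "GTIP_Xt f1 f2 y \<longleftrightarrow> (\<exists>a>0. \<exists>b>0. \<forall>\<theta> t. t \<ge> 0 \<longrightarrow>
      measure (cond_law f1 f2 y \<theta>) {x. \<bar>x - \<theta>\<bar> > t} \<le> a * exp (- b * t))"

definition DUR :: "(real \<Rightarrow> real) \<Rightarrow> (real \<Rightarrow> real) \<Rightarrow> real \<Rightarrow> real \<Rightarrow> real \<Rightarrow> bool" where
  "DUR f1 f2 y d k \<longleftrightarrow> d > 0 \<and> k > 0 \<and> (\<forall>\<theta>. \<bar>\<theta>\<bar> > k \<longrightarrow>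
      \<bar>\<integral>x. x \<partial>cond_law f1 f2 y \<theta>\<bar> \<le> \<bar>\<theta>\<bar> - d)"

definition PUR :: "(real \<Rightarrow> real) \<Rightarrow> (real \<Rightarrow> real) \<Rightarrow> real \<Rightarrow> real \<Rightarrow> real \<Rightarrow> bool" where
  "PUR f1 f2 y d k \<longleftrightarrow> d > 0 \<and> k > 0 \<and> (\<forall>\<theta>. \<bar>\<theta>\<bar> > k \<longrightarrow>
      sgn \<theta> * (\<integral>x. (x - y) \<partial>cond_law f1 f2 y \<theta>) \<ge> d)"

end

theory Submission
  imports Defs
begin

text \<open>
  Fix the sign \<open>s = sgn \<theta>\<close> and look at the centred quantity
  \<open>W = s \<cdot> V - |\<theta>|\<close>, where \<open>V\<close> is \<open>X\<close> (part 1) or \<open>y - X~\<close> (part 2); then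
  \<open>|W| = |V - \<theta>|\<close> is \<open>|X~|\<close> resp. \<open>|y - X|\<close>, so the GTIP hypothesis gives an
  exponential tail bound for \<open>W\<close> uniformly in \<open>\<theta>\<close>, and DUR/PUR say \<open>E W \<le> -d\<close>.
  Pointwise \<open>e^{\<alpha>|V|} \<le> e^{\<alpha>|\<theta>|} e^{\<alpha> W} + e^{\<alpha>|W|}\<close>.  The tail bound yields a
  uniform bound \<open>K\<close> on \<open>E e^{c|W|}\<close> for some \<open>c > 0\<close>; the second-order estimate
  \<open>e^u \<le> 1 + u + u\<^sup>2 e^{|u|}\<close> then gives \<open>E e^{\<alpha> W} \<le> 1 - \<alpha> d + O(\<alpha>\<^sup>2) \<le> 1 - \<alpha> d/2\<close>
  for small \<open>\<alpha>\<close>, and \<open>E e^{\<alpha>|W|} \<le> K\<close>.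
\<close>

lemma exp_le_quadratic_nonpos:
  fixes u :: real assumes "u \<le> 0" shows "exp u \<le> 1 + u + u\<^sup>2"
proof -
  define v where "v = - u"
  have v: "v \<ge> 0" using assms by (simp add: v_def)
  have "0 \<le> (v - 1 / 2)\<^sup>2" by simp
  hence pos: "0 < 1 - v + v\<^sup>2" by (simp add: power2_eq_square algebra_simps)
  have "1 \<le> (1 - v + v\<^sup>2) * (1 + v)" using v by (simp add: algebra_simps power2_eq_square)
  also have "\<dots> \<le> (1 - v + v\<^sup>2) * exp v" using pos by (simp add: mult_left_mono)
  finally have "exp (- v) \<le> 1 - v + v\<^sup>2" by (simp add: exp_minus field_simps)
  thus ?thesis by (simp add: v_def)
qed

lemma exp_le_second_order:
  fixes u :: real shows "exp u \<le> 1 + u + u\<^sup>2 * exp \<bar>u\<bar>"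
proof -
  have sq: "u\<^sup>2 \<le> u\<^sup>2 * exp \<bar>u\<bar>" using mult_left_mono[of 1 "exp \<bar>u\<bar>" "u\<^sup>2"] by simp
  consider "u \<le> 0" | "0 < u" "u \<le> 1" | "1 < u" by linarith
  thus ?thesis
  proof cases
    case 1 thus ?thesis using exp_le_quadratic_nonpos[of u] sq by linarith
  next
    case 2 thus ?thesis using exp_bound[of u] sq by linarith
  next
    case 3
    hence "1 \<le> u\<^sup>2" by (simp add: one_le_power)
    hence "exp u \<le> u\<^sup>2 * exp \<bar>u\<bar>" using 3 mult_right_mono[of 1 "u\<^sup>2" "exp u"] by simp
    thus ?thesis using 3 by linarith
  qed
qed

lemma square_le_exp_abs:
  fixes w s :: real assumes "s > 0" shows "w\<^sup>2 \<le> 4 / s\<^sup>2 * exp (s * \<bar>w\<bar>)"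
proof -
  have h: "s * \<bar>w\<bar> / 2 \<le> exp (s * \<bar>w\<bar> / 2)"
    using exp_ge_add_one_self[of "s * \<bar>w\<bar> / 2"] by linarith
  have "(s * \<bar>w\<bar> / 2)\<^sup>2 \<le> (exp (s * \<bar>w\<bar> / 2))\<^sup>2"
    using h assms by (intro power_mono) auto
  also have "\<dots> = exp (s * \<bar>w\<bar>)" by (simp add: power2_eq_square flip: exp_add)
  finally have "s\<^sup>2 * w\<^sup>2 / 4 \<le> exp (s * \<bar>w\<bar>)" by (simp add: power_mult_distrib power_divide)
  thus ?thesis using assms by (simp add: field_simps)
qed

text \<open>Pointwise splitting of \<open>e^{\<alpha>|v|}\<close> around the level \<open>r \<ge> 0\<close> in direction \<open>s = \<plusminus>1\<close>:
  either \<open>s v \<ge> 0\<close> and \<open>e^{\<alpha>|v|} = e^{\<alpha> r} e^{\<alpha>(s v - r)}\<close>, or \<open>|v| \<le> |s v - r|\<close>.\<close>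
lemma exp_abs_split:
  fixes s v r \<alpha> :: real assumes "\<bar>s\<bar> = 1" "r \<ge> 0" "\<alpha> \<ge> 0"
  shows "exp (\<alpha> * \<bar>v\<bar>) \<le> exp (\<alpha> * r) * exp (\<alpha> * (s * v - r)) + exp (\<alpha> * \<bar>s * v - r\<bar>)"
proof -
  have split: "exp (\<alpha> * r) * exp (\<alpha> * (s * v - r)) = exp (\<alpha> * (s * v))"
    by (simp add: algebra_simps flip: exp_add)
  have abs_v: "\<bar>v\<bar> = \<bar>s * v\<bar>" using assms by (simp add: abs_mult)
  show ?thesis
  proof (cases "s * v \<ge> 0")
    case True thus ?thesis using split abs_v by simp
  next
    case False
    hence "\<bar>v\<bar> \<le> \<bar>s * v - r\<bar>" using abs_v assms(2) by linarith
    hence "exp (\<alpha> * \<bar>v\<bar>) \<le> exp (\<alpha> * \<bar>s * v - r\<bar>)" using assms(3) by (simp add: mult_left_mono)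
    thus ?thesis by (simp add: add_increasing)
  qed
qed

section \<open>Random variables with an exponential tail\<close>

definition exp_tail :: "'a measure \<Rightarrow> ('a \<Rightarrow> real) \<Rightarrow> real \<Rightarrow> real \<Rightarrow> bool" where
  "exp_tail M W a b \<longleftrightarrow> (\<forall>t\<ge>0. measure M {x\<in>space M. t < \<bar>W x\<bar>} \<le> a * exp (- b * t))"

text \<open>The bound on \<open>E e^{c|W|}\<close> that an exponential tail with constants \<open>a, b\<close>
  yields for \<open>0 \<le> c < b\<close>.\<close>
definition moment_const :: "real \<Rightarrow> real \<Rightarrow> real \<Rightarrow> real" where
  "moment_const a b c = (a + 1) * exp (b + c) / (1 - exp (c - b))"

lemma moment_const_pos: "a > 0 \<Longrightarrow> c < b \<Longrightarrow> moment_const a b c > 0"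
  by (simp add: moment_const_def)

text \<open>The layers \<open>{n \<le> |W|}\<close> have geometrically decreasing probability; the
  constant is enlarged so that the trivial bound covers the layer \<open>n = 0\<close>.\<close>
lemma exp_tail_layer_bound:
  assumes "prob_space M" and Wm[measurable]: "W \<in> borel_measurable M"
    and a: "a > 0" and b: "b > 0" and tail: "exp_tail M W a b"
  shows "measure M {x\<in>space M. real n \<le> \<bar>W x\<bar>} \<le> (a + 1) * exp b * exp (- b * real n)"
proof -
  interpret prob_space M by fact
  show ?thesis
  proof (cases n)
    case 0
    have "1 * 1 \<le> (a + 1) * exp b" using a b by (intro mult_mono) auto
    moreover have "measure M {x\<in>space M. real n \<le> \<bar>W x\<bar>} \<le> 1" by (rule prob_le_1)
    ultimately show ?thesis using 0 by (simp add: prob_space)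
  next
    case (Suc m)
    have "measure M {x\<in>space M. real n \<le> \<bar>W x\<bar>} \<le> measure M {x\<in>space M. real m < \<bar>W x\<bar>}"
      using Suc by (intro finite_measure_mono) (auto, measurable)
    also have "\<dots> \<le> a * exp (- b * real m)" using tail by (simp add: exp_tail_def)
    also have "\<dots> = a * exp b * exp (- b * real n)" using Suc by (simp add: algebra_simps flip: exp_add)
    also have "\<dots> \<le> (a + 1) * exp b * exp (- b * real n)" by (intro mult_right_mono) auto
    finally show ?thesis .
  qed
qed

text \<open>Exponential tail implies finite exponential moments of every order \<open>c < b\<close>:
  dominate \<open>e^{c|W|}\<close> by \<open>\<Sum>\<^sub>n e^{c(n+1)} 1{n \<le> |W|}\<close> and sum a geometric series.\<close>
lemma exp_moment_from_tail:
  assumes P: "prob_space M" and Wm[measurable]: "W \<in> borel_measurable M"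
    and a: "a > 0" and b: "b > 0" and c: "0 \<le> c" "c < b" and tail: "exp_tail M W a b"
  shows "(\<integral>\<^sup>+x. ennreal (exp (c * \<bar>W x\<bar>)) \<partial>M) \<le> ennreal (moment_const a b c)"
proof -
  interpret prob_space M by (rule P)
  define A where "A n = {x\<in>space M. real n \<le> \<bar>W x\<bar>}" for n :: nat
  have A_sets[measurable]: "A n \<in> sets M" for n unfolding A_def by measurable
  define r where "r = exp (c - b)"
  have r: "0 \<le> r" "r < 1" using c by (auto simp: r_def)
  define C where "C = (a + 1) * exp (b + c)"
  have C: "C > 0" using a by (simp add: C_def)
  define f where "f n = ennreal (exp (c * (real n + 1)))" for n :: nat
  have dominate: "ennreal (exp (c * \<bar>W x\<bar>)) \<le> (\<Sum>n. f n * indicator (A n) x)"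
    if x: "x \<in> space M" for x
  proof -
    define n where "n = nat \<lfloor>\<bar>W x\<bar>\<rfloor>"
    have n: "real n \<le> \<bar>W x\<bar>" "\<bar>W x\<bar> \<le> real n + 1" unfolding n_def by linarith+
    have "ennreal (exp (c * \<bar>W x\<bar>)) \<le> f n * indicator (A n) x"
      using n c x by (auto simp: f_def A_def intro!: ennreal_leI mult_left_mono)
    also have "\<dots> \<le> (\<Sum>m. f m * indicator (A m) x)"
      using sum_le_suminf[OF summableI, of "{n}" "\<lambda>m. f m * indicator (A m) x"]
      by (simp only: sum.insert_if finite.emptyI sum.empty empty_iff if_False add_0_right) auto
    finally show ?thesis .
  qed
  have layer: "f n * emeasure M (A n) \<le> ennreal (C * r ^ n)" for n
  proof -
    have "f n * emeasure M (A n) = ennreal (exp (c * (real n + 1)) * measure M (A n))"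
      by (simp add: f_def emeasure_eq_measure ennreal_mult)
    also have "\<dots> \<le> ennreal (exp (c * (real n + 1)) * ((a + 1) * exp b * exp (- b * real n)))"
      using exp_tail_layer_bound[OF P Wm a b tail, of n]
      by (intro ennreal_leI mult_left_mono) (auto simp: A_def)
    also have "exp (c * (real n + 1)) * ((a + 1) * exp b * exp (- b * real n)) = C * r ^ n"
      by (simp add: C_def r_def algebra_simps flip: exp_add exp_of_nat_mult)
    finally show ?thesis .
  qed
  have "(\<integral>\<^sup>+x. ennreal (exp (c * \<bar>W x\<bar>)) \<partial>M) \<le> (\<integral>\<^sup>+x. (\<Sum>n. f n * indicator (A n) x) \<partial>M)"
    using dominate by (intro nn_integral_mono) auto
  also have "\<dots> = (\<Sum>n. f n * emeasure M (A n))"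
    by (simp add: nn_integral_suminf nn_integral_cmult_indicator)
  also have "\<dots> \<le> (\<Sum>n. ennreal (C * r ^ n))"
    using layer by (intro suminf_le summableI)
  also have "\<dots> = ennreal (C * (1 / (1 - r)))"
    using C r by (intro suminf_ennreal_eq sums_mult geometric_sums) auto
  finally show ?thesis by (simp add: moment_const_def C_def r_def)
qed

lemma integrable_of_exp_moment:
  assumes P: "prob_space M" and Wm[measurable]: "W \<in> borel_measurable M" and c: "c > 0"
    and K: "K \<ge> 0" and mom: "(\<integral>\<^sup>+x. ennreal (exp (c * \<bar>W x\<bar>)) \<partial>M) \<le> ennreal K"
  shows "integrable M (\<lambda>x. exp (c * \<bar>W x\<bar>))" and "integrable M W"
    and "(\<integral>x. exp (c * \<bar>W x\<bar>) \<partial>M) \<le> K"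
proof -
  have "(\<integral>\<^sup>+x. ennreal (norm (exp (c * \<bar>W x\<bar>))) \<partial>M) < \<infinity>"
    using le_less_trans[OF mom ennreal_less_top] by simp
  thus int_exp: "integrable M (\<lambda>x. exp (c * \<bar>W x\<bar>))"
    by (intro integrableI_bounded) auto
  have "norm (W x) \<le> norm (1 / c * exp (c * \<bar>W x\<bar>))" for x
  proof -
    have "c * \<bar>W x\<bar> \<le> exp (c * \<bar>W x\<bar>)" using exp_ge_add_one_self[of "c * \<bar>W x\<bar>"] by linarith
    thus ?thesis using c by (simp add: field_simps)
  qed
  thus "integrable M W"
    by (intro Bochner_Integration.integrable_bound[OF integrable_mult_right[OF int_exp, of "1 / c"]]) auto
  have "ennreal (\<integral>x. exp (c * \<bar>W x\<bar>) \<partial>M) \<le> ennreal K"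
    using mom by (simp add: nn_integral_eq_integral[OF int_exp, symmetric])
  thus "(\<integral>x. exp (c * \<bar>W x\<bar>) \<partial>M) \<le> K" using K by simp
qed

lemma mgf_second_order_bound:
  assumes P: "prob_space M" and Wm[measurable]: "W \<in> borel_measurable M"
    and c: "c > 0" and \<alpha>: "0 \<le> \<alpha>" "\<alpha> \<le> c / 2"
    and K: "K \<ge> 0" and mom: "(\<integral>\<^sup>+x. ennreal (exp (c * \<bar>W x\<bar>)) \<partial>M) \<le> ennreal K"
  shows "(\<integral>\<^sup>+x. ennreal (exp (\<alpha> * W x)) \<partial>M)
           \<le> ennreal (1 + \<alpha> * (\<integral>x. W x \<partial>M) + \<alpha>\<^sup>2 * (16 / c\<^sup>2) * K)"
proof -
  interpret prob_space M by (rule P)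
  note int_exp = integrable_of_exp_moment(1)[OF P Wm c K mom]
    and int_W = integrable_of_exp_moment(2)[OF P Wm c K mom]
    and exp_le_K = integrable_of_exp_moment(3)[OF P Wm c K mom]
  define g where "g x = 1 + \<alpha> * W x + \<alpha>\<^sup>2 * (16 / c\<^sup>2) * exp (c * \<bar>W x\<bar>)" for x
  have quad: "(\<alpha> * W x)\<^sup>2 * exp \<bar>\<alpha> * W x\<bar> \<le> \<alpha>\<^sup>2 * (16 / c\<^sup>2) * exp (c * \<bar>W x\<bar>)" for x
  proof -
    have sq: "(W x)\<^sup>2 \<le> 16 / c\<^sup>2 * exp (c / 2 * \<bar>W x\<bar>)"
      using square_le_exp_abs[of "c / 2" "W x"] c by (simp add: power_divide)
    have "exp \<bar>\<alpha> * W x\<bar> \<le> exp (c / 2 * \<bar>W x\<bar>)"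
      using \<alpha> mult_right_mono[OF \<alpha>(2) abs_ge_zero[of "W x"]] by (simp add: abs_mult)
    hence "(W x)\<^sup>2 * exp \<bar>\<alpha> * W x\<bar> \<le> 16 / c\<^sup>2 * exp (c / 2 * \<bar>W x\<bar>) * exp (c / 2 * \<bar>W x\<bar>)"
      using sq by (intro mult_mono) auto
    also have "\<dots> = 16 / c\<^sup>2 * exp (c * \<bar>W x\<bar>)" by (simp add: mult.assoc flip: exp_add)
    finally have "\<alpha>\<^sup>2 * ((W x)\<^sup>2 * exp \<bar>\<alpha> * W x\<bar>) \<le> \<alpha>\<^sup>2 * (16 / c\<^sup>2 * exp (c * \<bar>W x\<bar>))"
      by (rule mult_left_mono) simp
    thus ?thesis by (simp add: power_mult_distrib mult.assoc)
  qed
  have g_bound: "exp (\<alpha> * W x) \<le> g x" for x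
    using exp_le_second_order[of "\<alpha> * W x"] quad[of x] unfolding g_def by linarith
  have int_g: "integrable M g" unfolding g_def using int_W int_exp by auto
  have "(\<integral>\<^sup>+x. ennreal (exp (\<alpha> * W x)) \<partial>M) \<le> (\<integral>\<^sup>+x. ennreal (g x) \<partial>M)"
    by (intro nn_integral_mono ennreal_leI g_bound)
  also have "\<dots> = ennreal (\<integral>x. g x \<partial>M)"
    by (rule nn_integral_eq_integral[OF int_g]) (use g_bound in \<open>auto intro: order_trans[OF exp_ge_zero]\<close>)
  also have "(\<integral>x. g x \<partial>M)
      = 1 + \<alpha> * (\<integral>x. W x \<partial>M) + \<alpha>\<^sup>2 * (16 / c\<^sup>2) * (\<integral>x. exp (c * \<bar>W x\<bar>) \<partial>M)"
    unfolding g_def using int_W int_exp by (simp add: prob_space)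
  also have "\<dots> \<le> 1 + \<alpha> * (\<integral>x. W x \<partial>M) + \<alpha>\<^sup>2 * (16 / c\<^sup>2) * K"
    using exp_le_K by (intro add_left_mono mult_left_mono) auto
  finally show ?thesis by (metis ennreal_leI)
qed

text \<open>Negative drift \<open>E W \<le> -d\<close> together with \<open>E e^{c|W|} \<le> K\<close> forces \<open>E e^{\<alpha> W} \<le> 1 - \<alpha> d/2\<close>
  once \<open>\<alpha>\<close> is small enough for the second-order term to be at most \<open>\<alpha> d/2\<close>.\<close>
lemma mgf_bound_of_negative_drift:
  assumes P: "prob_space M" and Wm[measurable]: "W \<in> borel_measurable M" and c: "c > 0" and K: "K > 0"
    and mom: "(\<integral>\<^sup>+x. ennreal (exp (c * \<bar>W x\<bar>)) \<partial>M) \<le> ennreal K"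
    and EW: "(\<integral>x. W x \<partial>M) \<le> - d"
    and \<alpha>: "0 < \<alpha>" "\<alpha> \<le> c / 2" "\<alpha> \<le> d * c\<^sup>2 / (32 * K)"
  shows "(\<integral>\<^sup>+x. ennreal (exp (\<alpha> * W x)) \<partial>M) \<le> ennreal (1 - \<alpha> * d / 2)"
proof -
  have "\<alpha>\<^sup>2 * (16 / c\<^sup>2) * K \<le> \<alpha> * (d / 2)"
    using \<alpha> c K by (simp add: field_simps power2_eq_square)
  hence "1 + \<alpha> * (\<integral>x. W x \<partial>M) + \<alpha>\<^sup>2 * (16 / c\<^sup>2) * K \<le> 1 - \<alpha> * d / 2"
    using mult_left_mono[OF EW, of \<alpha>] \<alpha> by linarith
  thus ?thesis
    using mgf_second_order_bound[OF P Wm c less_imp_le[OF \<alpha>(1)] \<alpha>(2) less_imp_le[OF K] mom]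
    by (metis ennreal_leI order_trans)
qed

lemma exp_tail_shift:
  assumes P: "prob_space M" and Wm[measurable]: "W \<in> borel_measurable M"
    and a: "a > 0" and b: "b > 0" and tail: "exp_tail M W a b"
  shows "exp_tail M (\<lambda>x. y - W x) ((a + 1) * exp (b * \<bar>y\<bar>)) b"
  unfolding exp_tail_def
proof (intro allI impI)
  interpret prob_space M by (rule P)
  fix t :: real assume t: "t \<ge> 0"
  show "measure M {x\<in>space M. t < \<bar>y - W x\<bar>} \<le> (a + 1) * exp (b * \<bar>y\<bar>) * exp (- b * t)"
  proof (cases "\<bar>y\<bar> \<le> t")
    case True
    have "measure M {x\<in>space M. t < \<bar>y - W x\<bar>} \<le> measure M {x\<in>space M. t - \<bar>y\<bar> < \<bar>W x\<bar>}"
      by (intro finite_measure_mono) (auto, measurable)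
    also have "\<dots> \<le> a * exp (- b * (t - \<bar>y\<bar>))" using tail True by (simp add: exp_tail_def)
    also have "\<dots> = a * exp (b * \<bar>y\<bar>) * exp (- b * t)" by (simp add: algebra_simps flip: exp_add)
    also have "\<dots> \<le> (a + 1) * exp (b * \<bar>y\<bar>) * exp (- b * t)" by (intro mult_right_mono) auto
    finally show ?thesis .
  next
    case False
    have "1 \<le> exp (b * \<bar>y\<bar> + - b * t)" using False b by (simp add: algebra_simps mult_left_mono)
    also have "\<dots> \<le> (a + 1) * exp (b * \<bar>y\<bar> + - b * t)" using a by simp
    finally have "1 \<le> (a + 1) * exp (b * \<bar>y\<bar>) * exp (- b * t)" by (simp add: mult.assoc flip: exp_add)
    thus ?thesis using prob_le_1[of "{x\<in>space M. t < \<bar>y - W x\<bar>}"] by linarith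
  qed
qed

section \<open>Moment bounds under a uniform negative drift\<close>

lemma nn_integral_exp_abs_split:
  assumes Vm[measurable]: "V \<in> borel_measurable M" and s: "\<bar>s\<bar> = 1" and r: "r \<ge> 0" and \<alpha>: "\<alpha> \<ge> 0"
  shows "(\<integral>\<^sup>+x. ennreal (exp (\<alpha> * \<bar>V x\<bar>)) \<partial>M)
    \<le> ennreal (exp (\<alpha> * r)) * (\<integral>\<^sup>+x. ennreal (exp (\<alpha> * (s * V x - r))) \<partial>M)
       + (\<integral>\<^sup>+x. ennreal (exp (\<alpha> * \<bar>s * V x - r\<bar>)) \<partial>M)"
proof -
  have "ennreal (exp (\<alpha> * \<bar>V x\<bar>))
      \<le> ennreal (exp (\<alpha> * r)) * ennreal (exp (\<alpha> * (s * V x - r))) + ennreal (exp (\<alpha> * \<bar>s * V x - r\<bar>))" for x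
  proof -
    have "ennreal (exp (\<alpha> * \<bar>V x\<bar>))
        \<le> ennreal (exp (\<alpha> * r) * exp (\<alpha> * (s * V x - r)) + exp (\<alpha> * \<bar>s * V x - r\<bar>))"
      using exp_abs_split[OF s r \<alpha>, of "V x"] by (rule ennreal_leI)
    thus ?thesis by (simp add: ennreal_mult ennreal_plus)
  qed
  hence "(\<integral>\<^sup>+x. ennreal (exp (\<alpha> * \<bar>V x\<bar>)) \<partial>M)
      \<le> (\<integral>\<^sup>+x. ennreal (exp (\<alpha> * r)) * ennreal (exp (\<alpha> * (s * V x - r))) + ennreal (exp (\<alpha> * \<bar>s * V x - r\<bar>)) \<partial>M)"
    by (intro nn_integral_mono)
  also have "\<dots> = ennreal (exp (\<alpha> * r)) * (\<integral>\<^sup>+x. ennreal (exp (\<alpha> * (s * V x - r))) \<partial>M)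
       + (\<integral>\<^sup>+x. ennreal (exp (\<alpha> * \<bar>s * V x - r\<bar>)) \<partial>M)"
    by (simp add: nn_integral_add nn_integral_cmult)
  finally show ?thesis .
qed

text \<open>The admissible range \<open>0 < \<alpha> < drift_rate a b d\<close> of exponents: small enough for the
  second-order term \<open>\<alpha>\<^sup>2 (16/c\<^sup>2) K\<close> (with \<open>c = b/2\<close>) to be at most \<open>\<alpha> d/2\<close>, and for
  \<open>1 - \<alpha> d/2\<close> to stay positive.\<close>
definition drift_rate :: "real \<Rightarrow> real \<Rightarrow> real \<Rightarrow> real" where
  "drift_rate a b d = min (b / 4) (min (1 / d) (d * (b / 2)\<^sup>2 / (32 * moment_const a b (b / 2))))"

lemma drift_rate_pos: "a > 0 \<Longrightarrow> b > 0 \<Longrightarrow> d > 0 \<Longrightarrow> drift_rate a b d > 0"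
  using moment_const_pos[of a "b / 2" b] by (simp add: drift_rate_def)

lemma moment_bound_of_negative_drift:
  assumes P: "prob_space M" and Vm[measurable]: "V \<in> borel_measurable M"
    and s: "\<bar>s\<bar> = 1" and r: "r \<ge> 0" and a: "a > 0" and b: "b > 0" and d: "d > 0"
    and tail: "exp_tail M (\<lambda>x. s * V x - r) a b"
    and drift: "integrable M V \<Longrightarrow> s * (\<integral>x. V x \<partial>M) \<le> r - d"
    and \<alpha>: "0 < \<alpha>" "\<alpha> < drift_rate a b d"
  shows "(\<integral>\<^sup>+x. ennreal (exp (\<alpha> * \<bar>V x\<bar>)) \<partial>M)
           \<le> ennreal (exp (\<alpha> * r) * (1 - \<alpha> * d / 2) + moment_const a b (b / 2))"
proof -
  interpret prob_space M by (rule P)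
  define W where "W x = s * V x - r" for x
  define c where "c = b / 2"
  define K where "K = moment_const a b c"
  have Wm[measurable]: "W \<in> borel_measurable M" unfolding W_def by measurable
  have c: "c > 0" and K: "K > 0" using a b moment_const_pos[of a c b] by (auto simp: c_def K_def)
  have \<alpha>_c: "\<alpha> \<le> c / 2" and \<alpha>_d: "\<alpha> < 1 / d" and \<alpha>_K: "\<alpha> \<le> d * c\<^sup>2 / (32 * K)"
    using \<alpha> by (auto simp: drift_rate_def c_def K_def)
  have "0 \<le> c" "c < b" using b by (auto simp: c_def)
  hence mom: "(\<integral>\<^sup>+x. ennreal (exp (c * \<bar>W x\<bar>)) \<partial>M) \<le> ennreal K"
    unfolding K_def by (rule exp_moment_from_tail[OF P Wm a b _ _ tail[folded W_def]])
  have "s * s = 1" using s abs_mult_self_eq[of s] by simp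
  hence V_eq: "V x = s * (W x + r)" for x
    by (simp add: W_def ring_distribs mult.assoc[symmetric])
  have "integrable M (\<lambda>x. s * (W x + r))"
    using integrable_of_exp_moment(2)[OF P Wm c less_imp_le[OF K] mom] by auto
  hence "integrable M V" by (simp only: V_eq[symmetric])
  hence EW: "(\<integral>x. W x \<partial>M) \<le> - d"
    using drift by (simp add: W_def prob_space)
  have mgf: "(\<integral>\<^sup>+x. ennreal (exp (\<alpha> * W x)) \<partial>M) \<le> ennreal (1 - \<alpha> * d / 2)"
    by (rule mgf_bound_of_negative_drift[OF P Wm c K mom EW \<alpha>(1) \<alpha>_c \<alpha>_K])
  have "(\<integral>\<^sup>+x. ennreal (exp (\<alpha> * \<bar>W x\<bar>)) \<partial>M) \<le> (\<integral>\<^sup>+x. ennreal (exp (c * \<bar>W x\<bar>)) \<partial>M)"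
    using \<alpha> \<alpha>_c c by (intro nn_integral_mono ennreal_leI) (simp add: mult_right_mono)
  hence abs_mom: "(\<integral>\<^sup>+x. ennreal (exp (\<alpha> * \<bar>W x\<bar>)) \<partial>M) \<le> ennreal K"
    using mom by simp
  have pos: "0 \<le> 1 - \<alpha> * d / 2" using \<alpha>_d d \<alpha> by (simp add: field_simps)
  have "(\<integral>\<^sup>+x. ennreal (exp (\<alpha> * \<bar>V x\<bar>)) \<partial>M)
      \<le> ennreal (exp (\<alpha> * r)) * ennreal (1 - \<alpha> * d / 2) + ennreal K"
    using nn_integral_exp_abs_split[OF Vm s r less_imp_le[OF \<alpha>(1)], folded W_def] mgf abs_mom
    by (meson add_mono mult_left_mono order_trans zero_le)
  also have "\<dots> = ennreal (exp (\<alpha> * r) * (1 - \<alpha> * d / 2) + K)"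
    using pos K by (simp add: ennreal_mult ennreal_plus)
  finally show ?thesis by (simp add: K_def c_def)
qed

text \<open>The
  centring \<open>W = sgn \<theta> \<cdot> V - |\<theta>|\<close> satisfies \<open>|W| = |V - \<theta>|\<close>.\<close>
lemma uniform_moment_bound_of_drift:
  fixes M :: "real \<Rightarrow> 'a measure" and V :: "real \<Rightarrow> 'a \<Rightarrow> real"
  assumes prob: "\<And>\<theta>. prob_space (M \<theta>)" and meas: "\<And>\<theta>. V \<theta> \<in> borel_measurable (M \<theta>)"
    and k: "k \<ge> 0" and a: "a > 0" and b: "b > 0" and d: "d > 0"
    and tail: "\<And>\<theta>. \<bar>\<theta>\<bar> > k \<Longrightarrow> exp_tail (M \<theta>) (\<lambda>x. V \<theta> x - \<theta>) a b"
    and drift: "\<And>\<theta>. \<bar>\<theta>\<bar> > k \<Longrightarrow> integrable (M \<theta>) (V \<theta>) \<Longrightarrow> sgn \<theta> * (\<integral>x. V \<theta> x \<partial>M \<theta>) \<le> \<bar>\<theta>\<bar> - d"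
  shows "\<exists>\<alpha>0>0. \<forall>\<alpha>. 0 < \<alpha> \<and> \<alpha> < \<alpha>0 \<longrightarrow> (\<exists>K>0. \<forall>\<theta>. \<bar>\<theta>\<bar> > k \<longrightarrow>
           (\<integral>\<^sup>+x. ennreal (exp (\<alpha> * \<bar>V \<theta> x\<bar>)) \<partial>M \<theta>) \<le> ennreal (exp (\<alpha> * \<bar>\<theta>\<bar>) * (1 - \<alpha> * d / 2) + K))"
proof -
  have bound: "(\<integral>\<^sup>+x. ennreal (exp (\<alpha> * \<bar>V \<theta> x\<bar>)) \<partial>M \<theta>)
      \<le> ennreal (exp (\<alpha> * \<bar>\<theta>\<bar>) * (1 - \<alpha> * d / 2) + moment_const a b (b / 2))"
    if \<alpha>: "0 < \<alpha>" "\<alpha> < drift_rate a b d" and \<theta>: "\<bar>\<theta>\<bar> > k" for \<alpha> \<theta> :: real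
  proof -
    have s: "\<bar>sgn \<theta>\<bar> = 1" using \<theta> k by (auto simp: sgn_if)
    have "\<bar>sgn \<theta> * V \<theta> x - \<bar>\<theta>\<bar>\<bar> = \<bar>V \<theta> x - \<theta>\<bar>" for x
      using \<theta> k by (auto simp: sgn_if abs_if algebra_simps)
    hence "exp_tail (M \<theta>) (\<lambda>x. sgn \<theta> * V \<theta> x - \<bar>\<theta>\<bar>) a b"
      using tail[OF \<theta>] by (simp add: exp_tail_def)
    from moment_bound_of_negative_drift[OF prob meas s abs_ge_zero a b d this drift[OF \<theta>] \<alpha>]
    show ?thesis .
  qed
  moreover have "drift_rate a b d > 0" "moment_const a b (b / 2) > 0"
    using drift_rate_pos[OF a b d] moment_const_pos[OF a, of "b / 2" b] b by auto
  ultimately show ?thesis by blast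
qed

section \<open>The conditional law of the model\<close>

text \<open>The conditional law is a density w.r.t. Lebesgue measure, so it lives on the
  Borel sets of the real line.\<close>
lemma cond_law_space[simp]: "space (cond_law f1 f2 y \<theta>) = UNIV"
  by (simp add: cond_law_def)

lemma sets_cond_law: "sets (cond_law f1 f2 y \<theta>) = sets borel"
  by (simp add: cond_law_def)

lemma borel_measurable_cond_law:
  "g \<in> borel_measurable borel \<Longrightarrow> g \<in> borel_measurable (cond_law f1 f2 y \<theta>)"
  using measurable_cong_sets[OF sets_cond_law refl] by blast

text \<open>The unnormalised conditional density \<open>f\<^sub>1(y - x) f\<^sub>2(x - \<theta>)\<close> is positive and
  integrable, since \<open>f\<^sub>1\<close> is bounded and a translate of \<open>f\<^sub>2\<close> is integrable.\<close>
lemma lik_pos_integrable: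
  assumes f1: "noise_density f1" and f2: "noise_density f2"
  shows "\<And>x. 0 < lik f1 f2 y \<theta> x" and "integrable lborel (lik f1 f2 y \<theta>)"
proof -
  obtain B where B: "\<And>x. f1 x \<le> B" using f1 unfolding noise_density_def by blast
  have pos1: "\<And>x. 0 < f1 x" and pos2: "\<And>x. 0 < f2 x" and int2: "integrable lborel f2"
    using f1 f2 unfolding noise_density_def by auto
  have m1[measurable]: "f1 \<in> borel_measurable borel" and m2[measurable]: "f2 \<in> borel_measurable borel"
    using f1 f2 unfolding noise_density_def by (auto intro: borel_measurable_continuous_onI)
  show pos: "\<And>x. 0 < lik f1 f2 y \<theta> x" using pos1 pos2 by (simp add: lik_def)
  have "integrable lborel (\<lambda>x. f2 (- \<theta> + 1 * x))"
    using lborel_integrable_real_affine_iff[of 1 f2 "- \<theta>"] int2 by simp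
  hence int_bound: "integrable lborel (\<lambda>x. B * f2 (x - \<theta>))"
    by (intro integrable_mult_right) (simp add: add.commute)
  have dominated: "norm (lik f1 f2 y \<theta> x) \<le> norm (B * f2 (x - \<theta>))" for x
  proof -
    have "f1 (y - x) * f2 (x - \<theta>) \<le> B * f2 (x - \<theta>)"
      using B[of "y - x"] pos2[of "x - \<theta>"] by (intro mult_right_mono) auto
    thus ?thesis using pos1[of "y - x"] pos2[of "x - \<theta>"] by (simp add: lik_def)
  qed
  have "lik f1 f2 y \<theta> \<in> borel_measurable lborel" unfolding lik_def by measurable
  from Bochner_Integration.integrable_bound[OF int_bound this AE_I2[OF dominated]]
  show "integrable lborel (lik f1 f2 y \<theta>)" .
qed

lemma norm_const_pos:
  assumes "noise_density f1" and "noise_density f2"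
  shows "0 < norm_const f1 f2 y \<theta>"
proof -
  note pos = lik_pos_integrable(1)[OF assms] and int = lik_pos_integrable(2)[OF assms]
  have "norm_const f1 f2 y \<theta> \<noteq> 0"
  proof
    assume "norm_const f1 f2 y \<theta> = 0"
    hence "AE x in lborel. lik f1 f2 y \<theta> x = 0"
      using integral_nonneg_eq_0_iff_AE[OF int] pos by (simp add: norm_const_def less_imp_le)
    hence "AE (x::real) in lborel. False"
      by eventually_elim (use pos in \<open>simp add: less_le\<close>)
    moreover have "(AE (x::real) in lborel. False) \<longleftrightarrow> emeasure lborel (UNIV :: real set) = 0"
      by (rule AE_iff_measurable) auto
    ultimately show False by simp
  qed
  moreover have "0 \<le> norm_const f1 f2 y \<theta>"
    unfolding norm_const_def using pos by (intro integral_nonneg_AE AE_I2) (simp add: less_imp_le)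
  ultimately show ?thesis by simp
qed

lemma prob_space_cond_law:
  assumes f1: "noise_density f1" and f2: "noise_density f2"
  shows "prob_space (cond_law f1 f2 y \<theta>)"
proof (rule prob_spaceI)
  define N where "N = norm_const f1 f2 y \<theta>"
  note pos = lik_pos_integrable(1)[OF f1 f2] and int = lik_pos_integrable(2)[OF f1 f2]
  have N: "0 < N" unfolding N_def by (rule norm_const_pos[OF f1 f2])
  have "emeasure (cond_law f1 f2 y \<theta>) (space (cond_law f1 f2 y \<theta>))
      = (\<integral>\<^sup>+x. ennreal (lik f1 f2 y \<theta> x / N) \<partial>lborel)"
    unfolding cond_law_def N_def using int by (subst emeasure_density) auto
  also have "\<dots> = ennreal (\<integral>x. lik f1 f2 y \<theta> x / N \<partial>lborel)"
    using int N pos by (intro nn_integral_eq_integral) (auto intro!: AE_I2 less_imp_le)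
  also have "(\<integral>x. lik f1 f2 y \<theta> x / N \<partial>lborel) = 1"
    using N by (simp add: N_def norm_const_def)
  finally show "emeasure (cond_law f1 f2 y \<theta>) (space (cond_law f1 f2 y \<theta>)) = 1" by simp
qed

text \<open>Part (1): under DUR and GTIP for \<open>(X~, \<Theta>)\<close>, apply the family bound to \<open>V = X\<close>;
  the deviation \<open>X - \<theta> = X~\<close> has the GTIP tail and \<open>sgn \<theta> E X \<le> |E X| \<le> |\<theta>| - d\<close>.\<close>
lemma DUR_exp_moment_bound:
  assumes f1: "noise_density f1" and f2: "noise_density f2"
    and DUR: "DUR f1 f2 y d k" and GTIP: "GTIP_Xt f1 f2 y"
  shows "\<exists>\<alpha>0>0. \<forall>\<alpha>. 0 < \<alpha> \<and> \<alpha> < \<alpha>0 \<longrightarrow> (\<exists>K>0. \<forall>\<theta>. \<bar>\<theta>\<bar> > k \<longrightarrow>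
           (\<integral>\<^sup>+x. ennreal (exp (\<alpha> * \<bar>x\<bar>)) \<partial>cond_law f1 f2 y \<theta>)
             \<le> ennreal (exp (\<alpha> * \<bar>\<theta>\<bar>) * (1 - \<alpha> * d / 2) + K))"
proof -
  obtain a b where a: "a > 0" and b: "b > 0"
    and tail: "\<And>\<theta>. exp_tail (cond_law f1 f2 y \<theta>) (\<lambda>x. x - \<theta>) a b"
    using GTIP unfolding GTIP_Xt_def exp_tail_def by auto
  have d: "d > 0" and k: "k \<ge> 0" using DUR by (auto simp: DUR_def)
  have drift: "sgn \<theta> * (\<integral>x. x \<partial>cond_law f1 f2 y \<theta>) \<le> \<bar>\<theta>\<bar> - d" if "\<bar>\<theta>\<bar> > k" for \<theta>
  proof -
    have "sgn \<theta> * (\<integral>x. x \<partial>cond_law f1 f2 y \<theta>) \<le> \<bar>\<integral>x. x \<partial>cond_law f1 f2 y \<theta>\<bar>"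
      by (cases \<theta> "0::real" rule: linorder_cases) auto
    thus ?thesis using DUR that by (auto simp: DUR_def)
  qed
  have "(\<lambda>x. x) \<in> borel_measurable (cond_law f1 f2 y \<theta>)" for \<theta>
    by (intro borel_measurable_cond_law) simp
  from uniform_moment_bound_of_drift[where V = "\<lambda>\<theta> x. x", OF prob_space_cond_law[OF f1 f2]
      this k a b d tail drift]
  show ?thesis .
qed

text \<open>Part (2): under PUR and GTIP for \<open>(X, \<Theta>)\<close>, apply the family bound to
  \<open>V = y - X~\<close>; its deviation \<open>y - X\<close> is a shift of \<open>X\<close>, and
  \<open>sgn \<theta> E V = |\<theta>| - sgn \<theta> E(X - y) \<le> |\<theta>| - d\<close>.\<close>
lemma PUR_exp_moment_bound:
  assumes f1: "noise_density f1" and f2: "noise_density f2"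
    and PUR: "PUR f1 f2 y d k" and GTIP: "GTIP_X f1 f2 y"
  shows "\<exists>\<alpha>0>0. \<forall>\<alpha>. 0 < \<alpha> \<and> \<alpha> < \<alpha>0 \<longrightarrow> (\<exists>K>0. \<forall>\<theta>. \<bar>\<theta>\<bar> > k \<longrightarrow>
           (\<integral>\<^sup>+x. ennreal (exp (\<alpha> * \<bar>y - (x - \<theta>)\<bar>)) \<partial>cond_law f1 f2 y \<theta>)
             \<le> ennreal (exp (\<alpha> * \<bar>\<theta>\<bar>) * (1 - \<alpha> * d / 2) + K))"
proof -
  obtain a b where a: "a > 0" and b: "b > 0"
    and tail_X: "\<And>\<theta>. exp_tail (cond_law f1 f2 y \<theta>) (\<lambda>x. x) a b"
    using GTIP unfolding GTIP_X_def exp_tail_def by auto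
  have d: "d > 0" and k: "k \<ge> 0" using PUR by (auto simp: PUR_def)
  have measurable_id: "(\<lambda>x. x) \<in> borel_measurable (cond_law f1 f2 y \<theta>)"
    and measurable_V: "(\<lambda>x. y - (x - \<theta>)) \<in> borel_measurable (cond_law f1 f2 y \<theta>)" for \<theta>
    by (intro borel_measurable_cond_law; measurable)+
  have tail: "exp_tail (cond_law f1 f2 y \<theta>) (\<lambda>x. y - (x - \<theta>) - \<theta>) ((a + 1) * exp (b * \<bar>y\<bar>)) b" for \<theta>
  proof -
    have "(\<lambda>x. y - (x - \<theta>) - \<theta>) = (\<lambda>x. y - x)" by auto
    with exp_tail_shift[OF prob_space_cond_law[OF f1 f2] measurable_id a b tail_X]
    show ?thesis by (simp only:)
  qed
  have drift: "sgn \<theta> * (\<integral>x. y - (x - \<theta>) \<partial>cond_law f1 f2 y \<theta>) \<le> \<bar>\<theta>\<bar> - d"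
    if \<theta>: "\<bar>\<theta>\<bar> > k" and int: "integrable (cond_law f1 f2 y \<theta>) (\<lambda>x. y - (x - \<theta>))" for \<theta>
  proof -
    interpret prob_space "cond_law f1 f2 y \<theta>" by (rule prob_space_cond_law[OF f1 f2])
    have "integrable (cond_law f1 f2 y \<theta>) (\<lambda>x. y + \<theta> - (y - (x - \<theta>)))"
      by (rule Bochner_Integration.integrable_diff[OF integrable_const int])
    moreover have "(\<lambda>x. y + \<theta> - (y - (x - \<theta>))) = (\<lambda>x. x)" by (simp add: algebra_simps)
    ultimately have "integrable (cond_law f1 f2 y \<theta>) (\<lambda>x. x)" by (simp only:)
    hence mean: "(\<integral>x. y - (x - \<theta>) \<partial>cond_law f1 f2 y \<theta>) = \<theta> - (\<integral>x. (x - y) \<partial>cond_law f1 f2 y \<theta>)"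
      using prob_space by simp
    have "sgn \<theta> * \<theta> = \<bar>\<theta>\<bar>" by (simp add: sgn_mult_abs[symmetric] abs_sgn_eq sgn_if)
    moreover have "d \<le> sgn \<theta> * (\<integral>x. (x - y) \<partial>cond_law f1 f2 y \<theta>)"
      using PUR \<theta> by (simp add: PUR_def)
    ultimately show ?thesis unfolding mean right_diff_distrib by linarith
  qed
  have "0 < (a + 1) * exp (b * \<bar>y\<bar>)" using a by simp
  from uniform_moment_bound_of_drift[where V = "\<lambda>\<theta> x. y - (x - \<theta>)", OF prob_space_cond_law[OF f1 f2]
      measurable_V k this b d tail drift]
  show ?thesis .
qed

theorem mainTheorem5:
  fixes f1 f2 :: "real \<Rightarrow> real" and y d k :: real
  assumes f1: "noise_density f1" and f2: "noise_density f2"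
  shows "(DUR f1 f2 y d k \<and> GTIP_Xt f1 f2 y \<longrightarrow>
           (\<exists>\<alpha>0>0. \<forall>\<alpha>. 0 < \<alpha> \<and> \<alpha> < \<alpha>0 \<longrightarrow> (\<exists>K>0. \<forall>\<theta>. \<bar>\<theta>\<bar> > k \<longrightarrow>
              (\<integral>\<^sup>+x. ennreal (exp (\<alpha> * \<bar>x\<bar>)) \<partial>cond_law f1 f2 y \<theta>)
                \<le> ennreal (exp (\<alpha> * \<bar>\<theta>\<bar>) * (1 - \<alpha> * d / 2) + K))))
       \<and> (PUR f1 f2 y d k \<and> GTIP_X f1 f2 y \<longrightarrow>
           (\<exists>\<alpha>0>0. \<forall>\<alpha>. 0 < \<alpha> \<and> \<alpha> < \<alpha>0 \<longrightarrow> (\<exists>K>0. \<forall>\<theta>. \<bar>\<theta>\<bar> > k \<longrightarrow>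
              (\<integral>\<^sup>+x. ennreal (exp (\<alpha> * \<bar>y - (x - \<theta>)\<bar>)) \<partial>cond_law f1 f2 y \<theta>)
                \<le> ennreal (exp (\<alpha> * \<bar>\<theta>\<bar>) * (1 - \<alpha> * d / 2) + K))))"
  using DUR_exp_moment_bound[OF f1 f2] PUR_exp_moment_bound[OF f1 f2] by blast

end
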